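(* Let $(V,o)$ be a normal surface singularity with $p_f(V,o)>0$, and let $\pi\colon X\to V$ be the minimal resolution. Assume that the fundamental cycle $Z$ is essentially irreducible, let $A$ be the unique irreducible component of $Z$ that is not a $(-2)$-curve, and assume $K_X\cdot A+Z^2\ge0$ and $D_m=Z_{min}$, where $D_m$ is the smallest term of the Yau sequence for $Z$. Then the canonical cycle is $$Z_K=\Big(\frac{2-2p_f(V,o)}{Z^2}+1\Big)Y,$$ where $Y$ is the Yau cycle.
   Context: Let $\pi^{-1}(o)=\bigcup_{i=1}^nE_i$ be the irreducible components of the exceptional set. A cycle is $D=\sum d_iE_i$, $d_i\in\mathbb Z$; $D_1\le D_2$ is coefficientwise, $D_1<D_2$ means $D_1\le D_2$, $D_1\neq D_2$. $K_X$ is the canonical divisor of $X$; for a cycle $D>0$, $p_a(D)=1+\frac12(D^2+D\cdot K_X)$. The fundamental cycle $Z$ is the smallest cycle $D>0$ with support $\pi^{-1}(o)$ and $D\cdot E_i\le0$ for all $i$; $p_f(V,o)=p_a(Z)$. "$\mathcal O_D(-C)$ numerically trivial" means $C\cdot E=0$ for every component $E\le D$. $Z_{min}$ is the unique minimal cycle $0<Z_{min}\le Z$ with $p_a(Z_{min})=p_a(Z)$. Yau sequence: for a cycle $D$ that is the fundamental cycle on its support with $Z_{min}\le D$, $p_a(D)=p_f(V,o)$ and $D\cdot E=0$ for all components $E\le Z_{min}$, its Tyurina component is the unique maximal cycle $0<D'<D$ with $\mathcal O_{D'}(-D)$ numerically trivial and $p_a(D')=p_a(D)$. Set $D_1=Z$,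 $D_{i+1}=$ Tyurina component of $D_i$ as long as $D_i\cdot E=0$ for all components $E\le Z_{min}$, stopping at the first $D_m$ with $D_m\cdot Z_{min}<0$; $Y=\sum_{i=1}^mD_i$ is the Yau cycle. A $(-2)$-curve is a smooth rational exceptional curve $E$ with $E^2=-2$. $Z$ is essentially irreducible if there is a component $A\le Z$ which is not a $(-2)$-curve such that, with $k$ the coefficient of $A$ in $Z$, either $Z=kA$ or all components of $Z-kA$ are $(-2)$-curves. The canonical cycle $Z_K$ is the cycle with rational coefficients supported on $\pi^{-1}(o)$ with $Z_K\cdot E_i=-K_X\cdot E_i$ for all $i$. *)

theory Defs
  imports Main "HOL.Real"
begin

text \<open>Numerical model of the exceptional set of a resolution of a normal surface
singularity.  Components are indexed by a finite type 'e.  M i j = E_i . E_j is the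
intersection matrix; g i is the arithmetic genus p_a(E_i) of the irreducible curve E_i.
By adjunction K_X . E_i = -E_i^2 + 2 p_a(E_i) - 2.  A cycle is a function 'e => int.\<close>

type_synonym 'e cycle = "'e \<Rightarrow> int"

definition KE :: "('e \<Rightarrow> 'e \<Rightarrow> int) \<Rightarrow> ('e \<Rightarrow> int) \<Rightarrow> 'e \<Rightarrow> int" where
  "KE M g i = - M i i + 2 * g i - 2"

definition inter :: "('e::finite \<Rightarrow> 'e \<Rightarrow> int) \<Rightarrow> 'e cycle \<Rightarrow> 'e cycle \<Rightarrow> int" where
  "inter M D C = (\<Sum>i\<in>UNIV. \<Sum>j\<in>UNIV. D i * M i j * C j)"

definition interE :: "('e::finite \<Rightarrow> 'e \<Rightarrow> int) \<Rightarrow> 'e cycle \<Rightarrow> 'e \<Rightarrow> int" where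
  "interE M D i = (\<Sum>j\<in>UNIV. D j * M j i)"

definition Kdot :: "('e::finite \<Rightarrow> 'e \<Rightarrow> int) \<Rightarrow> ('e \<Rightarrow> int) \<Rightarrow> 'e cycle \<Rightarrow> int" where
  "Kdot M g D = (\<Sum>i\<in>UNIV. D i * KE M g i)"

definition resolution_data :: "('e::finite \<Rightarrow> 'e \<Rightarrow> int) \<Rightarrow> ('e \<Rightarrow> int) \<Rightarrow> bool" where
  "resolution_data M g \<longleftrightarrow>
     (\<forall>i j. M i j = M j i) \<and>
     (\<forall>i j. i \<noteq> j \<longrightarrow> M i j \<ge> 0) \<and>
     (\<forall>x::'e \<Rightarrow> real. x \<noteq> (\<lambda>_. 0) \<longrightarrow>
        (\<Sum>i\<in>UNIV. \<Sum>j\<in>UNIV. x i * real_of_int (M i j) * x j) < 0) \<and>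
     {(i, j). i \<noteq> j \<and> M i j > 0}\<^sup>* = UNIV \<and>
     (\<forall>i. g i \<ge> 0)"

text \<open>Minimal resolution: no (-1)-curve, i.e. no smooth rational component with E^2=-1.
(An irreducible curve with p_a = 0 is smooth rational.)\<close>
definition minimal_resolution :: "('e \<Rightarrow> 'e \<Rightarrow> int) \<Rightarrow> ('e \<Rightarrow> int) \<Rightarrow> bool" where
  "minimal_resolution M g \<longleftrightarrow> (\<forall>i. \<not> (g i = 0 \<and> M i i = -1))"

definition minus2_curve :: "('e \<Rightarrow> 'e \<Rightarrow> int) \<Rightarrow> ('e \<Rightarrow> int) \<Rightarrow> 'e \<Rightarrow> bool" where
  "minus2_curve M g i \<longleftrightarrow> g i = 0 \<and> M i i = -2"

definition pos_cycle :: "'e cycle \<Rightarrow> bool" where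
  "pos_cycle D \<longleftrightarrow> (\<forall>i. D i \<ge> 0) \<and> D \<noteq> (\<lambda>_. 0)"

definition supp :: "'e cycle \<Rightarrow> 'e set" where
  "supp D = {i. D i \<noteq> 0}"

definition pa :: "('e::finite \<Rightarrow> 'e \<Rightarrow> int) \<Rightarrow> ('e \<Rightarrow> int) \<Rightarrow> 'e cycle \<Rightarrow> real" where
  "pa M g D = 1 + (real_of_int (inter M D D) + real_of_int (Kdot M g D)) / 2"

definition fund_cond :: "('e::finite \<Rightarrow> 'e \<Rightarrow> int) \<Rightarrow> 'e set \<Rightarrow> 'e cycle \<Rightarrow> bool" where
  "fund_cond M S D \<longleftrightarrow> pos_cycle D \<and> supp D = S \<and> (\<forall>i\<in>S. interE M D i \<le> 0)"

definition fund_cycle_on :: "('e::finite \<Rightarrow> 'e \<Rightarrow> int) \<Rightarrow> 'e set \<Rightarrow> 'e cycle" where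
  "fund_cycle_on M S = (THE D. fund_cond M S D \<and> (\<forall>D'. fund_cond M S D' \<longrightarrow> D \<le> D'))"

definition fund_cycle :: "('e::finite \<Rightarrow> 'e \<Rightarrow> int) \<Rightarrow> 'e cycle" where
  "fund_cycle M = fund_cycle_on M UNIV"

definition pf :: "('e::finite \<Rightarrow> 'e \<Rightarrow> int) \<Rightarrow> ('e \<Rightarrow> int) \<Rightarrow> real" where
  "pf M g = pa M g (fund_cycle M)"

definition zmin_cond :: "('e::finite \<Rightarrow> 'e \<Rightarrow> int) \<Rightarrow> ('e \<Rightarrow> int) \<Rightarrow> 'e cycle \<Rightarrow> bool" where
  "zmin_cond M g D \<longleftrightarrow> pos_cycle D \<and> D \<le> fund_cycle M \<and> pa M g D = pa M g (fund_cycle M)"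

definition Zmin :: "('e::finite \<Rightarrow> 'e \<Rightarrow> int) \<Rightarrow> ('e \<Rightarrow> int) \<Rightarrow> 'e cycle" where
  "Zmin M g = (THE D. zmin_cond M g D \<and> (\<forall>D'. zmin_cond M g D' \<and> D' \<le> D \<longrightarrow> D' = D))"

text \<open>Tyurina component of D: unique maximal cycle 0 < D' < D with O_{D'}(-D) numerically
trivial (D.E = 0 for every component E \<le> D') and p_a(D') = p_a(D).\<close>
definition tyurina_cond :: "('e::finite \<Rightarrow> 'e \<Rightarrow> int) \<Rightarrow> ('e \<Rightarrow> int) \<Rightarrow> 'e cycle \<Rightarrow> 'e cycle \<Rightarrow> bool" where
  "tyurina_cond M g D D' \<longleftrightarrow> pos_cycle D' \<and> D' < D \<and>
     (\<forall>i. D' i > 0 \<longrightarrow> interE M D i = 0) \<and> pa M g D' = pa M g D"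

definition tyurina :: "('e::finite \<Rightarrow> 'e \<Rightarrow> int) \<Rightarrow> ('e \<Rightarrow> int) \<Rightarrow> 'e cycle \<Rightarrow> 'e cycle" where
  "tyurina M g D = (THE D'. tyurina_cond M g D D' \<and>
       (\<forall>D''. tyurina_cond M g D D'' \<and> D' \<le> D'' \<longrightarrow> D'' = D'))"

text \<open>Yau sequence, 0-indexed: yau_seq M g k = D_{k+1}.  D_1 = Z and
D_{k+1} = Tyurina component of D_k as long as D_k.E = 0 for all components E \<le> Z_min.\<close>
fun yau_seq :: "('e::finite \<Rightarrow> 'e \<Rightarrow> int) \<Rightarrow> ('e \<Rightarrow> int) \<Rightarrow> nat \<Rightarrow> 'e cycle" where
  "yau_seq M g 0 = fund_cycle M"
| "yau_seq M g (Suc k) =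
     (if (\<forall>i. Zmin M g i > 0 \<longrightarrow> interE M (yau_seq M g k) i = 0)
      then tyurina M g (yau_seq M g k) else yau_seq M g k)"

text \<open>m is the (0-indexed) position of the last term D_m: the first k with D_k.Z_min < 0.\<close>
definition yau_last :: "('e::finite \<Rightarrow> 'e \<Rightarrow> int) \<Rightarrow> ('e \<Rightarrow> int) \<Rightarrow> nat \<Rightarrow> bool" where
  "yau_last M g m \<longleftrightarrow> inter M (yau_seq M g m) (Zmin M g) < 0 \<and>
     (\<forall>k<m. \<not> inter M (yau_seq M g k) (Zmin M g) < 0)"

definition yau_cycle :: "('e::finite \<Rightarrow> 'e \<Rightarrow> int) \<Rightarrow> ('e \<Rightarrow> int) \<Rightarrow> nat \<Rightarrow> 'e cycle" where
  "yau_cycle M g m = (\<lambda>i. \<Sum>k\<le>m. yau_seq M g k i)"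

definition essentially_irreducible :: "('e \<Rightarrow> 'e \<Rightarrow> int) \<Rightarrow> ('e \<Rightarrow> int) \<Rightarrow> 'e cycle \<Rightarrow> bool" where
  "essentially_irreducible M g Z \<longleftrightarrow>
     (\<exists>A. Z A > 0 \<and> \<not> minus2_curve M g A \<and>
        (let k = Z A; R = (\<lambda>i. Z i - (if i = A then k else 0)) in
          R = (\<lambda>_. 0) \<or> (\<forall>i. R i > 0 \<longrightarrow> minus2_curve M g i)))"

definition canonical_cycle :: "('e::finite \<Rightarrow> 'e \<Rightarrow> int) \<Rightarrow> ('e \<Rightarrow> int) \<Rightarrow> 'e \<Rightarrow> real" where
  "canonical_cycle M g = (THE Zk. \<forall>i. (\<Sum>j\<in>UNIV. Zk j * real_of_int (M j i)) = - real_of_int (KE M g i))"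

end

theory Submission
  imports Defs "HOL-Analysis.Analysis"
begin

text \<open>All components other than A are (-2)-curves, so K\<cdot>X = X_A (K\<cdot>A) and the genus of a
  cycle is governed by X\<cdot>X and X_A. Using K\<cdot>A + Z\<cdot>Z \<ge> 0, every cycle 0 < X \<le> Z with
  p_a(X) = p_a(Z) has X_A = Z_A and X\<cdot>X = Z\<cdot>Z, and these cycles form a lattice; this
  produces Z_min and the Tyurina components. Distinct terms of the Yau sequence are
  orthogonal, so Y\<cdot>Y = (m+1) Z\<cdot>Z = Y_A (Y\<cdot>A). A telescoping count along the sequence
  gives Y\<cdot>E \<ge> 0 for every (-2)-curve E, and then Y\<cdot>Y = Y_A (Y\<cdot>A) forces Y\<cdot>E = 0.
  Hence Y is numerically a multiple of K, namely Z_K = (Z_A K\<cdot>A / -Z\<cdot>Z) Y, and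
  2 p_f - 2 = Z\<cdot>Z + Z_A K\<cdot>A turns this coefficient into the stated one.\<close>

definition curve :: "'e \<Rightarrow> 'e cycle" where
  "curve E = (\<lambda>i. if i = E then 1 else 0)"

lemma curve_nonneg: "0 \<le> curve E i"
  by (simp add: curve_def)

lemma sum_curve_mult: "(\<Sum>j\<in>(UNIV::'e::finite set). curve E j * f j) = f E"
proof -
  have "(\<Sum>j\<in>UNIV. curve E j * f j) = (\<Sum>j\<in>(UNIV::'e set). if j = E then f j else 0)"
    by (rule sum.cong) (auto simp: curve_def)
  then show ?thesis by simp
qed

lemma inter_eq_sum_interE: "inter M D C = (\<Sum>j\<in>UNIV. C j * interE M D j)"
  unfolding inter_def interE_def
  by (subst sum.swap) (simp add: sum_distrib_left mult.commute mult.left_commute)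

lemma interE_add: "interE M (\<lambda>i. D i + C i) j = interE M D j + interE M C j"
  unfolding interE_def by (simp add: algebra_simps sum.distrib)

lemma interE_diff: "interE M (\<lambda>i. D i - C i) j = interE M D j - interE M C j"
  unfolding interE_def by (simp add: algebra_simps sum_subtractf)

lemma interE_sum: "interE M (\<lambda>j. \<Sum>i\<in>I. D i j) E = (\<Sum>i\<in>I. interE M (D i) E)"
  unfolding interE_def by (subst sum.swap) (simp add: sum_distrib_right)

lemma interE_curve: "interE M (curve E) j = M E j"
  unfolding interE_def using sum_curve_mult[of E "\<lambda>i. M i j"] by simp

lemma inter_add_left: "inter M (\<lambda>i. D i + C i) X = inter M D X + inter M C X"
  unfolding inter_eq_sum_interE by (simp add: interE_add algebra_simps sum.distrib)

lemma inter_diff_left: "inter M (\<lambda>i. D i - C i) X = inter M D X - inter M C X"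
  unfolding inter_eq_sum_interE by (simp add: interE_diff algebra_simps sum_subtractf)

lemma inter_add_right: "inter M X (\<lambda>i. D i + C i) = inter M X D + inter M X C"
  unfolding inter_eq_sum_interE by (simp add: algebra_simps sum.distrib)

lemma inter_diff_right: "inter M X (\<lambda>i. D i - C i) = inter M X D - inter M X C"
  unfolding inter_eq_sum_interE by (simp add: algebra_simps sum_subtractf)

lemma inter_sum_left: "inter M (\<lambda>j. \<Sum>i\<in>I. D i j) C = (\<Sum>i\<in>I. inter M (D i) C)"
  unfolding inter_eq_sum_interE interE_sum by (simp add: sum_distrib_left) (rule sum.swap)

lemma inter_sum_right: "inter M X (\<lambda>j. \<Sum>i\<in>I. C i j) = (\<Sum>i\<in>I. inter M X (C i))"
  unfolding inter_eq_sum_interE by (simp add: sum_distrib_right) (rule sum.swap)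

lemma inter_curve_right: "inter M X (curve E) = interE M X E"
  unfolding inter_eq_sum_interE by (rule sum_curve_mult)

lemma Kdot_add: "Kdot M g (\<lambda>i. D i + C i) = Kdot M g D + Kdot M g C"
  unfolding Kdot_def by (simp add: algebra_simps sum.distrib)

lemma Kdot_diff: "Kdot M g (\<lambda>i. D i - C i) = Kdot M g D - Kdot M g C"
  unfolding Kdot_def by (simp add: algebra_simps sum_subtractf)

lemma Kdot_curve: "Kdot M g (curve E) = KE M g E"
  unfolding Kdot_def by (rule sum_curve_mult)

lemma pos_cycleI: "\<forall>i. 0 \<le> X i \<Longrightarrow> 0 < X a \<Longrightarrow> pos_cycle X"
  unfolding pos_cycle_def fun_eq_iff by (metis less_irrefl)

lemma pos_cycle_nonneg: "pos_cycle X \<Longrightarrow> 0 \<le> X i"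
  unfolding pos_cycle_def by blast

lemma pos_cycle_nonzero: "pos_cycle X \<Longrightarrow> X \<noteq> (\<lambda>_. 0)"
  unfolding pos_cycle_def by blast

lemma min_closed_nonneg_has_least:
  fixes S :: "('e::finite \<Rightarrow> int) set"
  assumes "X0 \<in> S" and nonneg: "\<And>X. X \<in> S \<Longrightarrow> \<forall>i. 0 \<le> X i"
    and min_closed: "\<And>X Y. X \<in> S \<Longrightarrow> Y \<in> S \<Longrightarrow> (\<lambda>i. min (X i) (Y i)) \<in> S"
  shows "\<exists>L\<in>S. \<forall>X\<in>S. L \<le> X"
proof -
  let ?size = "\<lambda>X. nat (\<Sum>i\<in>UNIV. X i)"
  obtain L where L: "L \<in> S" and L_min: "\<And>Y. Y \<in> S \<Longrightarrow> ?size L \<le> ?size Y"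
    using ex_has_least_nat[of "\<lambda>X. X \<in> S" X0 ?size] \<open>X0 \<in> S\<close> by auto
  have "L \<le> X" if X: "X \<in> S" for X
  proof -
    let ?mn = "\<lambda>i. min (L i) (X i)"
    have mn: "?mn \<in> S" using min_closed[OF L X] .
    have "0 \<le> (\<Sum>i\<in>UNIV. ?mn i)" "0 \<le> (\<Sum>i\<in>UNIV. L i)"
      using nonneg[OF mn] nonneg[OF L] by (simp_all add: sum_nonneg)
    with L_min[OF mn] have "(\<Sum>i\<in>UNIV. L i) \<le> (\<Sum>i\<in>UNIV. ?mn i)"
      by linarith
    then have "(\<Sum>i\<in>UNIV. L i - ?mn i) = 0"
      by (simp add: sum_subtractf order_antisym sum_mono)
    then have "\<forall>i\<in>UNIV. L i - ?mn i = 0"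
      by (subst (asm) sum_nonneg_eq_0_iff) auto
    then show ?thesis by (auto simp: le_fun_def min_def split: if_splits)
  qed
  with L show ?thesis by blast
qed

lemma max_closed_bounded_has_greatest:
  fixes S :: "('e::finite \<Rightarrow> int) set"
  assumes "X0 \<in> S" and bounded: "\<And>X. X \<in> S \<Longrightarrow> X \<le> B"
    and max_closed: "\<And>X Y. X \<in> S \<Longrightarrow> Y \<in> S \<Longrightarrow> (\<lambda>i. max (X i) (Y i)) \<in> S"
  shows "\<exists>G\<in>S. \<forall>X\<in>S. X \<le> G"
proof -
  let ?flip = "\<lambda>X i. B i - X i"
  have flip_min: "(\<lambda>i. min (?flip X i) (?flip Y i)) = ?flip (\<lambda>i. max (X i) (Y i))" for X Y
    by (auto simp: fun_eq_iff)
  have "\<exists>L\<in>?flip ` S. \<forall>X\<in>?flip ` S. L \<le> X"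
    using \<open>X0 \<in> S\<close> bounded max_closed
    by (intro min_closed_nonneg_has_least[of "?flip X0"])
      (auto simp: le_fun_def flip_min)
  then show ?thesis by (auto simp: le_fun_def)
qed

locale resolution_graph =
  fixes M :: "'e::finite \<Rightarrow> 'e \<Rightarrow> int" and g :: "'e \<Rightarrow> int"
  assumes resolution_data: "resolution_data M g"
begin

lemma M_sym: "M i j = M j i"
  and off_diagonal_nonneg: "i \<noteq> j \<Longrightarrow> 0 \<le> M i j"
  and negative_definite:
    "x \<noteq> (\<lambda>_. 0) \<Longrightarrow> (\<Sum>i\<in>UNIV. \<Sum>j\<in>UNIV. x i * real_of_int (M i j) * x j) < 0"
  and connected: "{(i, j). i \<noteq> j \<and> M i j > 0}\<^sup>* = UNIV"
  and genus_nonneg: "0 \<le> g i"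
  using resolution_data unfolding resolution_data_def by simp_all


lemma inter_commute: "inter M D C = inter M C D"
proof -
  have "inter M D C = (\<Sum>j\<in>UNIV. \<Sum>i\<in>UNIV. D i * M i j * C j)"
    unfolding inter_def by (rule sum.swap)
  also have "\<dots> = inter M C D"
    unfolding inter_def by (intro sum.cong refl) (simp add: M_sym)
  finally show ?thesis .
qed

lemma inter_self_neg: "D \<noteq> (\<lambda>_. 0) \<Longrightarrow> inter M D D < 0"
proof -
  assume "D \<noteq> (\<lambda>_. 0)"
  then have "(\<lambda>i. real_of_int (D i)) \<noteq> (\<lambda>_. 0)"
    by (auto simp: fun_eq_iff)
  from negative_definite[OF this] have "real_of_int (inter M D D) < 0"
    unfolding inter_def by (simp add: of_int_sum)
  then show ?thesis by simp
qed

lemma interE_mono: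
  assumes "C \<le> D" "C E = D E"
  shows "interE M C E \<le> interE M D E"
  unfolding interE_def
proof (rule sum_mono)
  fix j
  show "C j * M j E \<le> D j * M j E"
    using assms off_diagonal_nonneg[of j E] by (cases "j = E") (auto simp: le_fun_def mult_right_mono)
qed

lemma interE_nonneg_off_support: "\<forall>i. 0 \<le> D i \<Longrightarrow> D E = 0 \<Longrightarrow> 0 \<le> interE M D E"
  using interE_mono[of "\<lambda>_. 0" D E] by (simp add: le_fun_def interE_def)

lemma inter_nonneg_disjoint_supports:
  assumes "\<forall>i. 0 \<le> D i" "\<forall>i. 0 \<le> C i" "\<forall>i. D i = 0 \<or> C i = 0"
  shows "0 \<le> inter M D C"
  unfolding inter_eq_sum_interE
proof (rule sum_nonneg)
  fix j
  show "0 \<le> C j * interE M D j"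
  proof (cases "C j = 0")
    case False
    then have "D j = 0" using assms(3) by blast
    then show ?thesis using assms(1,2) interE_nonneg_off_support[of D j] by simp
  qed simp
qed

lemma real_quadratic_form_eq:
  "(\<Sum>i\<in>UNIV. \<Sum>j\<in>UNIV. x i * real_of_int (M i j) * x j)
     = (\<Sum>i\<in>UNIV. x i * (\<Sum>j\<in>UNIV. x j * real_of_int (M j i)))"
proof (rule sum.cong[OF refl])
  fix i
  show "(\<Sum>j\<in>UNIV. x i * real_of_int (M i j) * x j) = x i * (\<Sum>j\<in>UNIV. x j * real_of_int (M j i))"
    by (simp add: sum_distrib_left M_sym[of i] algebra_simps)
qed

lemma real_system_solvable: "\<exists>x. \<forall>i. (\<Sum>j\<in>UNIV. x j * real_of_int (M j i)) = c i"
proof -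
  define f :: "real^'e \<Rightarrow> real^'e" where "f x = (\<chi> i. \<Sum>j\<in>UNIV. x$j * real_of_int (M j i))" for x
  have "linear f"
    by (rule linearI) (simp_all add: f_def vec_eq_iff sum.distrib algebra_simps sum_distrib_left)
  moreover have "inj f"
  proof (rule linear_injective_0[THEN iffD2, OF \<open>linear f\<close>], intro allI impI)
    fix z assume "f z = 0"
    then have "(\<Sum>i\<in>UNIV. \<Sum>j\<in>UNIV. z$i * real_of_int (M i j) * z$j) = 0"
      unfolding real_quadratic_form_eq by (simp add: f_def vec_eq_iff)
    then have "(\<lambda>i. z$i) = (\<lambda>_. 0)"
      using negative_definite[of "\<lambda>i. z$i"] by fastforce
    then show "z = 0"
      by (simp add: vec_eq_iff fun_eq_iff)
  qed
  ultimately have "surj f" using linear_inj_imp_surj by blast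
  then obtain x where "f x = (\<chi> i. c i)" by (metis surjE)
  then show ?thesis by (auto simp: f_def vec_eq_iff)
qed

text \<open>Split x = p - n into positive and negative parts: then 0 \<ge> n\<cdot>(x M) = n\<cdot>(p M) - n\<cdot>(n M),
  where n\<cdot>(p M) \<ge> 0 as the supports are disjoint and -n\<cdot>(n M) > 0 unless n = 0.\<close>
lemma pos_if_row_sums_neg:
  assumes neg: "\<And>i. (\<Sum>j\<in>UNIV. x j * real_of_int (M j i)) < 0"
  shows "0 < x i"
proof -
  define n where "n i = max (- x i) 0" for i
  define p where "p i = max (x i) 0" for i
  have x_eq: "x i = p i - n i" for i
    unfolding p_def n_def by auto
  have n_zero: "n = (\<lambda>_. 0)"
  proof (rule ccontr)
    assume "n \<noteq> (\<lambda>_. 0)"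
    then have quad: "(\<Sum>i\<in>UNIV. \<Sum>j\<in>UNIV. n i * real_of_int (M i j) * n j) < 0"
      by (rule negative_definite)
    have cross: "0 \<le> (\<Sum>i\<in>UNIV. \<Sum>j\<in>UNIV. n i * p j * real_of_int (M j i))"
    proof (intro sum_nonneg)
      fix i j
      show "0 \<le> n i * p j * real_of_int (M j i)"
        using off_diagonal_nonneg[of j i] by (cases "i = j") (auto simp: n_def p_def)
    qed
    have split: "n i * (\<Sum>j\<in>UNIV. x j * real_of_int (M j i))
        = (\<Sum>j\<in>UNIV. n i * p j * real_of_int (M j i)) - (\<Sum>j\<in>UNIV. n i * real_of_int (M i j) * n j)" for i
      by (simp add: x_eq sum_distrib_left sum_subtractf[symmetric] algebra_simps M_sym[of i])
    have "(\<Sum>i\<in>UNIV. n i * (\<Sum>j\<in>UNIV. x j * real_of_int (M j i))) \<le> 0"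
    proof (intro sum_nonpos)
      fix i
      show "n i * (\<Sum>j\<in>UNIV. x j * real_of_int (M j i)) \<le> 0"
        using neg[of i] by (intro mult_nonneg_nonpos) (auto simp: n_def)
    qed
    then show False
      using quad cross by (simp add: split sum_subtractf)
  qed
  have x_nonneg: "0 \<le> x j" for j
    using x_eq[of j] n_zero by (simp add: p_def)
  show ?thesis
  proof (rule ccontr)
    assume "\<not> 0 < x i"
    then have "x i = 0" using x_nonneg[of i] by simp
    have "0 \<le> (\<Sum>j\<in>UNIV. x j * real_of_int (M j i))"
    proof (rule sum_nonneg)
      fix j
      show "0 \<le> x j * real_of_int (M j i)"
        using \<open>x i = 0\<close> x_nonneg[of j] off_diagonal_nonneg[of j i] by (cases "j = i") auto
    qed
    then show False using neg[of i] by simp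
  qed
qed

text \<open>Round up a large multiple of the positive real solution of x M = -1: the rounding
  error is bounded by the row sums of |M|, which the scale factor outweighs.\<close>
lemma exists_cycle_negative_on_curves: "\<exists>N. (\<forall>i. 0 < N i) \<and> (\<forall>i. interE M N i < 0)"
proof -
  obtain x where x: "\<And>i. (\<Sum>j\<in>UNIV. x j * real_of_int (M j i)) = -1"
    using real_system_solvable[of "\<lambda>_. -1"] by blast
  have x_pos: "0 < x i" for i
    using x by (intro pos_if_row_sums_neg) simp
  define t where "t = 1 + (\<Sum>a\<in>UNIV. \<Sum>b\<in>UNIV. \<bar>real_of_int (M a b)\<bar>)"
  have "1 \<le> t" unfolding t_def by (simp add: sum_nonneg)
  define N where "N j = \<lceil>t * x j\<rceil>" for j
  have "0 < N j" for j
  proof -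
    have "0 < t * x j" using \<open>1 \<le> t\<close> x_pos[of j] by simp
    then show ?thesis unfolding N_def by linarith
  qed
  moreover have "interE M N i < 0" for i
  proof -
    have err: "(real_of_int (N j) - t * x j) * real_of_int (M j i) \<le> \<bar>real_of_int (M j i)\<bar>" for j
    proof -
      have e: "0 \<le> real_of_int (N j) - t * x j" "real_of_int (N j) - t * x j \<le> 1"
        unfolding N_def by linarith+
      have "(real_of_int (N j) - t * x j) * real_of_int (M j i)
          \<le> (real_of_int (N j) - t * x j) * \<bar>real_of_int (M j i)\<bar>"
        using e by (intro mult_left_mono) auto
      also have "\<dots> \<le> \<bar>real_of_int (M j i)\<bar>"
        using e by (intro mult_left_le_one_le) auto
      finally show ?thesis .
    qed
    have "real_of_int (interE M N i)
        = (\<Sum>j\<in>UNIV. t * (x j * real_of_int (M j i)))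
          + (\<Sum>j\<in>UNIV. (real_of_int (N j) - t * x j) * real_of_int (M j i))"
      unfolding interE_def by (simp add: of_int_sum sum.distrib[symmetric] algebra_simps)
    also have "(\<Sum>j\<in>UNIV. t * (x j * real_of_int (M j i))) = - t"
      using x[of i] by (simp add: sum_distrib_left[symmetric])
    also have "(\<Sum>j\<in>UNIV. (real_of_int (N j) - t * x j) * real_of_int (M j i))
        \<le> (\<Sum>j\<in>UNIV. \<bar>real_of_int (M j i)\<bar>)"
      using err by (rule sum_mono)
    also have "(\<Sum>j\<in>UNIV. \<bar>real_of_int (M j i)\<bar>) \<le> (\<Sum>a\<in>UNIV. \<Sum>b\<in>UNIV. \<bar>real_of_int (M a b)\<bar>)"
      by (intro sum_mono member_le_sum) auto
    finally show ?thesis unfolding t_def by simp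
  qed
  ultimately show ?thesis by blast
qed

lemma fund_cond_UNIV_iff:
  "fund_cond M UNIV X \<longleftrightarrow> (\<forall>i. 0 < X i) \<and> (\<forall>i. interE M X i \<le> 0)"
  (is "_ \<longleftrightarrow> ?rhs")
proof
  assume "fund_cond M UNIV X"
  then show ?rhs
    unfolding fund_cond_def pos_cycle_def supp_def by (auto simp: order_le_less)
next
  assume ?rhs
  moreover from this have "pos_cycle X"
    by (intro pos_cycleI[of X undefined]) (auto simp: less_imp_le)
  moreover from \<open>?rhs\<close> have "\<forall>i. X i \<noteq> 0"
    by (metis less_irrefl)
  ultimately show "fund_cond M UNIV X"
    unfolding fund_cond_def supp_def by auto
qed

lemma fund_cycle_least_fund_cond:
  "fund_cond M UNIV (fund_cycle M) \<and> (\<forall>D. fund_cond M UNIV D \<longrightarrow> fund_cycle M \<le> D)"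
proof -
  obtain N where "\<forall>i. 0 < N i" "\<forall>i. interE M N i < 0"
    using exists_cycle_negative_on_curves by blast
  then have "fund_cond M UNIV N"
    by (simp add: fund_cond_UNIV_iff less_imp_le)
  moreover have "fund_cond M UNIV (\<lambda>i. min (X i) (Y i))"
    if "fund_cond M UNIV X" "fund_cond M UNIV Y" for X Y
  proof -
    have "interE M (\<lambda>i. min (X i) (Y i)) E \<le> 0" for E
    proof (cases "X E \<le> Y E")
      case True
      then have "interE M (\<lambda>i. min (X i) (Y i)) E \<le> interE M X E"
        by (intro interE_mono) (auto simp: le_fun_def)
      with that(1) show ?thesis unfolding fund_cond_UNIV_iff by (meson order_trans)
    next
      case False
      then have "interE M (\<lambda>i. min (X i) (Y i)) E \<le> interE M Y E"
        by (intro interE_mono) (auto simp: le_fun_def)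
      with that(2) show ?thesis unfolding fund_cond_UNIV_iff by (meson order_trans)
    qed
    with that show ?thesis
      by (simp add: fund_cond_UNIV_iff)
  qed
  ultimately obtain L where "fund_cond M UNIV L" "\<forall>D. fund_cond M UNIV D \<longrightarrow> L \<le> D"
    using min_closed_nonneg_has_least[of N "Collect (fund_cond M UNIV)"]
    by (auto simp: fund_cond_UNIV_iff less_imp_le)
  then have "\<exists>!Z. fund_cond M UNIV Z \<and> (\<forall>D. fund_cond M UNIV D \<longrightarrow> Z \<le> D)"
    by (auto intro: order_antisym)
  then show ?thesis
    unfolding fund_cycle_def fund_cycle_on_def by (rule theI')
qed

abbreviation Z where "Z \<equiv> fund_cycle M"

lemma fund_cycle_pos: "0 < Z i"
  and fund_cycle_interE_nonpos: "interE M Z i \<le> 0"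
  using fund_cycle_least_fund_cond by (simp_all add: fund_cond_UNIV_iff)

lemma fund_cycle_least: "\<forall>i. 0 < X i \<Longrightarrow> \<forall>i. interE M X i \<le> 0 \<Longrightarrow> Z \<le> X"
  using fund_cycle_least_fund_cond by (simp add: fund_cond_UNIV_iff)

lemma fund_cycle_nonzero: "Z \<noteq> (\<lambda>_. 0)"
  using fund_cycle_pos by (metis less_irrefl)

lemma exists_edge_leaving:
  assumes "P a" "\<not> P b"
  shows "\<exists>x y. x \<noteq> y \<and> 0 < M x y \<and> P x \<and> \<not> P y"
proof -
  have "(a, b) \<in> {(i, j). i \<noteq> j \<and> M i j > 0}\<^sup>*" using connected by simp
  then show ?thesis using \<open>\<not> P b\<close>
  proof (induction rule: rtrancl_induct)
    case base then show ?case using \<open>P a\<close> by simp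
  next
    case (step y z) then show ?case by (cases "P y") auto
  qed
qed

lemma eq_fund_cycle_if_interE_nonpos:
  assumes "pos_cycle X" "X \<le> Z" and nonpos: "\<forall>E. interE M X E \<le> 0"
  shows "X = Z"
proof (cases "\<forall>i. 0 < X i")
  case True
  then show ?thesis using fund_cycle_least[OF _ nonpos] \<open>X \<le> Z\<close> by (simp add: order_antisym)
next
  case False
  then obtain b where "X b = 0"
    using pos_cycle_nonneg[OF \<open>pos_cycle X\<close>] by (metis order_le_neq_trans)
  moreover obtain a where "X a \<noteq> 0"
    using pos_cycle_nonzero[OF \<open>pos_cycle X\<close>] by (auto simp: fun_eq_iff)
  ultimately obtain x y where xy: "x \<noteq> y" "0 < M x y" "X x \<noteq> 0" "X y = 0"
    using exists_edge_leaving[of "\<lambda>i. X i \<noteq> 0" a b] by blast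
  have "X x * M x y \<le> interE M X y"
    unfolding interE_def
  proof (rule member_le_sum)
    fix j assume "j \<in> UNIV - {x}"
    show "0 \<le> X j * M j y"
      using pos_cycle_nonneg[OF \<open>pos_cycle X\<close>, of j] off_diagonal_nonneg[of j y] xy
      by (cases "j = y") auto
  qed auto
  moreover have "0 < X x * M x y"
    using xy pos_cycle_nonneg[OF \<open>pos_cycle X\<close>, of x] by simp
  ultimately show ?thesis using nonpos[rule_format, of y] by simp
qed

definition pa2 :: "'e cycle \<Rightarrow> int" where
  "pa2 X = inter M X X + Kdot M g X"

lemma pa_eq_pa2: "pa M g X = 1 + real_of_int (pa2 X) / 2"
  unfolding pa_def pa2_def by simp

lemma pa_eq_iff: "pa M g X = pa M g Y \<longleftrightarrow> pa2 X = pa2 Y"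
  unfolding pa_eq_pa2 by simp

lemma pa2_add_curve: "pa2 (\<lambda>i. X i + curve E i) = pa2 X + 2 * interE M X E + 2 * g E - 2"
  unfolding pa2_def
  by (simp add: inter_add_left inter_add_right inter_curve_right interE_curve Kdot_add Kdot_curve
      inter_commute[of "curve E" X] KE_def)

lemma pa2_diff_curve:
  "pa2 (\<lambda>i. X i - curve E i) = pa2 X - 2 * interE M X E + 2 * M E E - 2 * g E + 2"
  unfolding pa2_def
  by (simp add: inter_diff_left inter_diff_right inter_curve_right interE_curve Kdot_diff Kdot_curve
      inter_commute[of "curve E" X] KE_def)

text \<open>Laufer's computation sequence: below Z, adding a curve E with X\<cdot>E > 0 never lowers
  the arithmetic genus, and the process can only stop at Z.\<close>
lemma pa2_le_fund_cycle:
  assumes "pos_cycle X" "X \<le> Z"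
  shows "pa2 X \<le> pa2 Z"
  using assms
proof (induction "nat (\<Sum>i\<in>UNIV. Z i - X i)" arbitrary: X rule: less_induct)
  case less
  show ?case
  proof (cases "\<exists>E. 0 < interE M X E")
    case True
    then obtain E where E: "0 < interE M X E" by blast
    have "X E < Z E"
      using interE_mono[OF \<open>X \<le> Z\<close>, of E] E fund_cycle_interE_nonpos[of E] less.prems(2)
      by (force simp: le_fun_def order_le_less)
    define X' where "X' = (\<lambda>i. X i + curve E i)"
    have "pos_cycle X'"
      using pos_cycle_nonneg[OF less.prems(1)]
      by (intro pos_cycleI[of X' E]) (auto simp: X'_def curve_def add_nonneg_pos)
    moreover have "X' \<le> Z"
      using less.prems(2) \<open>X E < Z E\<close> by (auto simp: X'_def curve_def le_fun_def)
    moreover have "(\<Sum>i\<in>UNIV. Z i - X' i) = (\<Sum>i\<in>UNIV. Z i - X i) - 1"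
      using sum_curve_mult[of E "\<lambda>_. 1"] by (simp add: X'_def sum_subtractf sum.distrib)
    moreover have "0 \<le> (\<Sum>i\<in>UNIV. Z i - X' i)"
      using \<open>X' \<le> Z\<close> by (intro sum_nonneg) (auto simp: le_fun_def)
    ultimately have "pa2 X' \<le> pa2 Z"
      by (intro less.hyps) auto
    then show ?thesis
      using pa2_add_curve[of X E] E genus_nonneg[of E] by (simp add: X'_def)
  next
    case False
    then show ?thesis
      using eq_fund_cycle_if_interE_nonpos[OF less.prems] by (simp add: not_less)
  qed
qed

lemma pa2_add_add:
  "pa2 (\<lambda>i. a i + b i + c i) + pa2 a
     = pa2 (\<lambda>i. a i + b i) + pa2 (\<lambda>i. a i + c i) + 2 * inter M b c"
proof -
  have "inter M (\<lambda>i. a i + b i + c i) (\<lambda>i. a i + b i + c i) + inter M a a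
      = inter M (\<lambda>i. a i + b i) (\<lambda>i. a i + b i) + inter M (\<lambda>i. a i + c i) (\<lambda>i. a i + c i)
        + 2 * inter M b c"
    unfolding inter_add_left inter_add_right
    using inter_commute[of b a] inter_commute[of c a] inter_commute[of c b] by simp
  moreover have "Kdot M g (\<lambda>i. a i + b i + c i) + Kdot M g a
      = Kdot M g (\<lambda>i. a i + b i) + Kdot M g (\<lambda>i. a i + c i)"
    unfolding Kdot_add by simp
  ultimately show ?thesis
    unfolding pa2_def by simp
qed

lemma pa2_max_plus_min:
  "pa2 (\<lambda>i. max (X i) (Y i)) + pa2 (\<lambda>i. min (X i) (Y i))
     = pa2 X + pa2 Y + 2 * inter M (\<lambda>i. X i - min (X i) (Y i)) (\<lambda>i. Y i - min (X i) (Y i))"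
proof -
  have "(\<lambda>i. max (X i) (Y i))
      = (\<lambda>i. min (X i) (Y i) + (X i - min (X i) (Y i)) + (Y i - min (X i) (Y i)))"
    by (auto simp: fun_eq_iff max_def min_def)
  then show ?thesis
    using pa2_add_add[of "\<lambda>i. min (X i) (Y i)" "\<lambda>i. X i - min (X i) (Y i)" "\<lambda>i. Y i - min (X i) (Y i)"]
    by simp
qed

lemma canonical_cycle_eqI:
  assumes "\<And>i. (\<Sum>j\<in>UNIV. Zk j * real_of_int (M j i)) = - real_of_int (KE M g i)"
  shows "canonical_cycle M g = Zk"
  unfolding canonical_cycle_def
proof (rule the_equality)
  fix Zk' assume Zk': "\<forall>i. (\<Sum>j\<in>UNIV. Zk' j * real_of_int (M j i)) = - real_of_int (KE M g i)"
  define z where "z j = Zk' j - Zk j" for j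
  have "(\<Sum>j\<in>UNIV. z j * real_of_int (M j i)) = 0" for i
    using Zk' assms by (simp add: z_def algebra_simps sum_subtractf)
  then have "(\<Sum>i\<in>UNIV. \<Sum>j\<in>UNIV. z i * real_of_int (M i j) * z j) = 0"
    unfolding real_quadratic_form_eq by simp
  then have "z = (\<lambda>_. 0)"
    using negative_definite[of z] by fastforce
  then show "Zk' = Zk"
    by (auto simp: z_def fun_eq_iff)
qed (use assms in blast)

end

locale ess_irreducible_resolution = resolution_graph M g
  for M :: "'e::finite \<Rightarrow> 'e \<Rightarrow> int" and g :: "'e \<Rightarrow> int" +
  fixes A :: 'e
  assumes minimal: "minimal_resolution M g"
    and ess_irreducible: "essentially_irreducible M g (fund_cycle M)"
    and A_not_minus2: "\<not> minus2_curve M g A"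
    and KE_A_plus_self_inter: "0 \<le> KE M g A + inter M (fund_cycle M) (fund_cycle M)"
begin

lemma minus2_curve_if_ne_A: "i \<noteq> A \<Longrightarrow> minus2_curve M g i"
proof -
  obtain A' where A': "\<not> minus2_curve M g A'"
    and rest: "(\<lambda>j. Z j - (if j = A' then Z A' else 0)) = (\<lambda>_. 0) \<or>
      (\<forall>j. 0 < Z j - (if j = A' then Z A' else 0) \<longrightarrow> minus2_curve M g j)"
    using ess_irreducible unfolding essentially_irreducible_def Let_def by blast
  have other: "minus2_curve M g j" if "j \<noteq> A'" for j
    using rest fund_cycle_pos[of j] that by (auto simp: fun_eq_iff split: if_splits)
  then have "A' = A" using A_not_minus2 other[of A] by auto
  with other show "i \<noteq> A \<Longrightarrow> minus2_curve M g i" by blast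
qed

lemma KE_eq_0: "i \<noteq> A \<Longrightarrow> KE M g i = 0"
  using minus2_curve_if_ne_A unfolding minus2_curve_def KE_def by simp

lemma KE_A_pos: "0 < KE M g A"
proof -
  have "M A A < 0"
    using inter_self_neg[of "curve A"] unfolding inter_curve_right interE_curve
    by (auto simp: curve_def fun_eq_iff)
  moreover have "g A = 0 \<Longrightarrow> M A A \<noteq> -1 \<and> M A A \<noteq> -2"
    using minimal A_not_minus2 unfolding minimal_resolution_def minus2_curve_def by blast
  ultimately show ?thesis
    using genus_nonneg[of A] unfolding KE_def by (cases "g A = 0") auto
qed

lemma Kdot_eq: "Kdot M g X = X A * KE M g A"
proof -
  have "Kdot M g X = (\<Sum>i\<in>UNIV. curve A i * (X i * KE M g i))"
    unfolding Kdot_def by (intro sum.cong refl) (auto simp: curve_def KE_eq_0)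
  then show ?thesis by (simp add: sum_curve_mult)
qed

lemma pf_eq: "pf M g = 1 + real_of_int (inter M Z Z + Z A * KE M g A) / 2"
  unfolding pf_def pa_eq_pa2 pa2_def Kdot_eq ..

lemma zmin_cond_iff: "zmin_cond M g X \<longleftrightarrow> pos_cycle X \<and> X \<le> Z \<and> pa2 X = pa2 Z"
  unfolding zmin_cond_def pa_eq_iff ..

lemma zmin_cond_nonneg: "zmin_cond M g X \<Longrightarrow> 0 \<le> X i"
  and zmin_cond_le_fund_cycle: "zmin_cond M g X \<Longrightarrow> X \<le> Z"
  by (simp_all add: zmin_cond_iff pos_cycle_nonneg)

lemma zmin_cond_fund_cycle: "zmin_cond M g Z"
  using fund_cycle_pos by (auto simp: zmin_cond_iff intro: pos_cycleI less_imp_le)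

text \<open>Both X\<cdot>X \<le> -1 and X_A \<le> Z_A, so pa2 X = X\<cdot>X + X_A K\<cdot>A can only reach
  pa2 Z = Z\<cdot>Z + Z_A K\<cdot>A if X_A = Z_A, because K\<cdot>A \<ge> -Z\<cdot>Z.\<close>
lemma zmin_cond_coeff_A:
  assumes "zmin_cond M g X"
  shows "X A = Z A" and "inter M X X = inter M Z Z"
proof -
  have "pos_cycle X" "X \<le> Z" "pa2 X = pa2 Z"
    using assms by (auto simp: zmin_cond_iff)
  then have eq: "inter M X X + X A * KE M g A = inter M Z Z + Z A * KE M g A"
    by (simp add: pa2_def Kdot_eq)
  have "inter M X X \<le> -1"
    using inter_self_neg[OF pos_cycle_nonzero[OF \<open>pos_cycle X\<close>]] by simp
  moreover have "X A \<le> Z A"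
    using \<open>X \<le> Z\<close> by (simp add: le_fun_def)
  ultimately show "X A = Z A"
  proof (rule_tac ccontr)
    assume "inter M X X \<le> -1" "X A \<le> Z A" "X A \<noteq> Z A"
    then have "KE M g A \<le> (Z A - X A) * KE M g A"
      using KE_A_pos by simp
    then have "0 \<le> inter M X X"
      using eq KE_A_plus_self_inter by (simp add: algebra_simps)
    with \<open>inter M X X \<le> -1\<close> show False by simp
  qed
  with eq show "inter M X X = inter M Z Z" by simp
qed

lemma zmin_cond_max_min:
  assumes X: "zmin_cond M g X" and Y: "zmin_cond M g Y"
  shows "zmin_cond M g (\<lambda>i. max (X i) (Y i))" and "zmin_cond M g (\<lambda>i. min (X i) (Y i))"
proof -
  have XY: "pos_cycle X" "X \<le> Z" "pa2 X = pa2 Z" "pos_cycle Y" "Y \<le> Z" "pa2 Y = pa2 Z"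
    using X Y by (auto simp: zmin_cond_iff)
  have A_pos: "0 < X A" "0 < Y A"
    using zmin_cond_coeff_A(1)[OF X] zmin_cond_coeff_A(1)[OF Y] fund_cycle_pos[of A] by auto
  let ?max = "\<lambda>i. max (X i) (Y i)" and ?min = "\<lambda>i. min (X i) (Y i)"
  have pos: "pos_cycle ?max" "pos_cycle ?min"
    using pos_cycle_nonneg[OF XY(1)] pos_cycle_nonneg[OF XY(4)] A_pos
    by (auto intro!: pos_cycleI[of _ A] simp: le_max_iff_disj)
  have le: "?max \<le> Z" "?min \<le> Z"
    using XY(2,5) by (auto simp: le_fun_def min_le_iff_disj)
  have "0 \<le> inter M (\<lambda>i. X i - min (X i) (Y i)) (\<lambda>i. Y i - min (X i) (Y i))"
    by (rule inter_nonneg_disjoint_supports) auto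
  then have "2 * pa2 Z \<le> pa2 ?max + pa2 ?min"
    using pa2_max_plus_min[of X Y] XY(3,6) by simp
  with pa2_le_fund_cycle[OF pos(1) le(1)] pa2_le_fund_cycle[OF pos(2) le(2)]
  have "pa2 ?max = pa2 Z" "pa2 ?min = pa2 Z" by auto
  with pos le show "zmin_cond M g ?max" "zmin_cond M g ?min"
    by (auto simp: zmin_cond_iff)
qed

lemma Zmin_least: "zmin_cond M g (Zmin M g) \<and> (\<forall>X. zmin_cond M g X \<longrightarrow> Zmin M g \<le> X)"
proof -
  obtain L where L: "zmin_cond M g L" "\<forall>X. zmin_cond M g X \<longrightarrow> L \<le> X"
    using min_closed_nonneg_has_least[of Z "Collect (zmin_cond M g)"]
      zmin_cond_fund_cycle zmin_cond_max_min(2)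
    by (auto simp: zmin_cond_def pos_cycle_def)
  have "Zmin M g = L"
    unfolding Zmin_def using L by (intro the_equality) (auto intro: order_antisym)
  with L show ?thesis by simp
qed

lemma zmin_cond_add_curve:
  assumes X: "zmin_cond M g X" and le: "(\<lambda>i. X i + curve E i) \<le> Z"
  shows "interE M X E + g E \<le> 1"
    and "interE M X E + g E = 1 \<Longrightarrow> zmin_cond M g (\<lambda>i. X i + curve E i)"
proof -
  have "pos_cycle X" "pa2 X = pa2 Z"
    using X by (auto simp: zmin_cond_iff)
  have "pos_cycle (\<lambda>i. X i + curve E i)"
    using pos_cycle_nonneg[OF \<open>pos_cycle X\<close>] curve_nonneg[of E]
    by (intro pos_cycleI[of _ E]) (auto simp: curve_def add_nonneg_pos)
  moreover have "pa2 (\<lambda>i. X i + curve E i) = pa2 Z + 2 * (interE M X E + g E - 1)"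
    using pa2_add_curve[of X E] \<open>pa2 X = pa2 Z\<close> by simp
  ultimately show "interE M X E + g E \<le> 1"
    and "interE M X E + g E = 1 \<Longrightarrow> zmin_cond M g (\<lambda>i. X i + curve E i)"
    using pa2_le_fund_cycle[of "\<lambda>i. X i + curve E i"] le by (auto simp: zmin_cond_iff)
qed

lemma zmin_cond_diff_curve:
  assumes "E \<noteq> A" and X: "zmin_cond M g X" and "0 < X E"
  shows "-1 \<le> interE M X E"
    and "interE M X E = -1 \<Longrightarrow> zmin_cond M g (\<lambda>i. X i - curve E i)"
proof -
  have "pos_cycle X" "X \<le> Z" "pa2 X = pa2 Z"
    using X by (auto simp: zmin_cond_iff)
  have "pos_cycle (\<lambda>i. X i - curve E i)"
    using pos_cycle_nonneg[OF \<open>pos_cycle X\<close>] \<open>0 < X E\<close> \<open>E \<noteq> A\<close>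
      zmin_cond_coeff_A(1)[OF X] fund_cycle_pos[of A]
    by (intro pos_cycleI[of _ A]) (auto simp: curve_def)
  moreover have "(\<lambda>i. X i - curve E i) \<le> Z"
  proof (rule le_funI)
    fix i
    show "X i - curve E i \<le> Z i"
      using le_funD[OF \<open>X \<le> Z\<close>, of i] curve_nonneg[of E i] by linarith
  qed
  moreover have "pa2 (\<lambda>i. X i - curve E i) = pa2 Z - 2 * (interE M X E + 1)"
    using pa2_diff_curve[of X E] \<open>pa2 X = pa2 Z\<close> minus2_curve_if_ne_A[OF \<open>E \<noteq> A\<close>]
    by (simp add: minus2_curve_def)
  ultimately show "-1 \<le> interE M X E"
    and "interE M X E = -1 \<Longrightarrow> zmin_cond M g (\<lambda>i. X i - curve E i)"
    using pa2_le_fund_cycle[of "\<lambda>i. X i - curve E i"] by (auto simp: zmin_cond_iff)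
qed

lemma Zmin_interE_nonneg:
  assumes "E \<noteq> A" "0 < Zmin M g E"
  shows "0 \<le> interE M (Zmin M g) E"
proof (rule ccontr)
  have Zmin: "zmin_cond M g (Zmin M g)"
    using Zmin_least by blast
  assume "\<not> 0 \<le> interE M (Zmin M g) E"
  then have "interE M (Zmin M g) E = -1"
    using zmin_cond_diff_curve(1)[OF assms(1) Zmin assms(2)] by simp
  then have "zmin_cond M g (\<lambda>i. Zmin M g i - curve E i)"
    by (rule zmin_cond_diff_curve(2)[OF assms(1) Zmin assms(2)])
  with Zmin_least have "Zmin M g \<le> (\<lambda>i. Zmin M g i - curve E i)" by blast
  then show False by (auto simp: le_fun_def curve_def dest: spec[of _ E])
qed

lemma zmin_cond_not_numerically_trivial:
  assumes "zmin_cond M g X"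
  shows "\<exists>i. 0 < X i \<and> interE M X i \<noteq> 0"
proof (rule ccontr)
  assume "\<nexists>i. 0 < X i \<and> interE M X i \<noteq> 0"
  moreover have "0 \<le> X i" for i
    using assms by (auto simp: zmin_cond_iff pos_cycle_def)
  ultimately have "inter M X X = 0"
    unfolding inter_eq_sum_interE by (intro sum.neutral) (metis mult_eq_0_iff order_le_less)
  then show False
    using zmin_cond_coeff_A(2)[OF assms] inter_self_neg[OF fund_cycle_nonzero] by simp
qed

lemma tyurina_cond_iff:
  assumes "zmin_cond M g D"
  shows "tyurina_cond M g D X \<longleftrightarrow> zmin_cond M g X \<and> X \<le> D \<and> (\<forall>i. 0 < X i \<longrightarrow> interE M D i = 0)"
  using assms zmin_cond_not_numerically_trivial[OF assms]
  unfolding tyurina_cond_def zmin_cond_def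
  by (auto simp: less_fun_def intro: order_trans)

lemma tyurina_greatest:
  assumes D: "zmin_cond M g D" and "Zmin M g \<le> D"
    and orth: "\<forall>j. 0 < Zmin M g j \<longrightarrow> interE M D j = 0"
  shows "tyurina_cond M g D (tyurina M g D)"
    and "tyurina_cond M g D X \<Longrightarrow> X \<le> tyurina M g D"
proof -
  let ?S = "Collect (tyurina_cond M g D)"
  have "Zmin M g \<in> ?S"
    using Zmin_least assms by (simp add: tyurina_cond_iff)
  moreover have "(\<lambda>i. max (X i) (Y i)) \<in> ?S" if "X \<in> ?S" "Y \<in> ?S" for X Y
  proof -
    have "zmin_cond M g X" "X \<le> D" "\<forall>i. 0 < X i \<longrightarrow> interE M D i = 0"
      "zmin_cond M g Y" "Y \<le> D" "\<forall>i. 0 < Y i \<longrightarrow> interE M D i = 0"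
      using that by (simp_all add: tyurina_cond_iff[OF D])
    then show ?thesis
      using zmin_cond_max_min(1) by (simp add: tyurina_cond_iff[OF D] le_fun_def less_max_iff_disj)
  qed
  moreover have "X \<le> D" if "X \<in> ?S" for X
    using that by (simp add: tyurina_cond_iff[OF D])
  ultimately obtain G where G: "tyurina_cond M g D G" "\<forall>X. tyurina_cond M g D X \<longrightarrow> X \<le> G"
    using max_closed_bounded_has_greatest[of "Zmin M g" ?S D] by blast
  have "tyurina M g D = G"
    unfolding tyurina_def using G by (intro the_equality) (auto intro: order_antisym)
  with G show "tyurina_cond M g D (tyurina M g D)"
    and "tyurina_cond M g D X \<Longrightarrow> X \<le> tyurina M g D" by auto
qed

end

locale yau_sequence_ending_at_Zmin = ess_irreducible_resolution M g A
  for M :: "'e::finite \<Rightarrow> 'e \<Rightarrow> int" and g :: "'e \<Rightarrow> int" and A :: 'e +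
  fixes m :: nat
  assumes yau_last: "yau_last M g m"
    and ends_at_Zmin: "yau_seq M g m = Zmin M g"
begin

abbreviation D where "D \<equiv> yau_seq M g"

text \<open>Once the continuation condition fails the sequence is constant, so it cannot fail
  before D_m, whose intersection with Z_min differs from that of all earlier terms.\<close>
lemma yau_continues: "i < m \<Longrightarrow> \<forall>j. 0 < Zmin M g j \<longrightarrow> interE M (D i) j = 0"
proof (rule ccontr)
  assume "i < m" and stop: "\<not> (\<forall>j. 0 < Zmin M g j \<longrightarrow> interE M (D i) j = 0)"
  have "D (i + n) = D i" for n
    by (induction n) (use stop in auto)
  then have "D m = D i" using \<open>i < m\<close> by (metis le_add_diff_inverse less_imp_le)
  with \<open>i < m\<close> yau_last show False
    unfolding yau_last_def by auto
qed

lemma yau_seq_Suc_eq_tyurina: "i < m \<Longrightarrow> D (Suc i) = tyurina M g (D i)"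
  using yau_continues by simp

declare yau_seq.simps(2) [simp del]

lemma yau_seq_zmin_cond: "i \<le> m \<Longrightarrow> zmin_cond M g (D i) \<and> Zmin M g \<le> D i"
proof (induction i)
  case 0
  then show ?case using zmin_cond_fund_cycle Zmin_least by simp
next
  case (Suc i)
  then have "zmin_cond M g (D i)" "Zmin M g \<le> D i" "\<forall>j. 0 < Zmin M g j \<longrightarrow> interE M (D i) j = 0"
    using yau_continues[of i] by auto
  moreover have "D (Suc i) = tyurina M g (D i)"
    using Suc.prems by (simp add: yau_seq_Suc_eq_tyurina)
  ultimately show ?case
    using tyurina_greatest[of "D i"] Zmin_least
    by (simp add: tyurina_cond_iff)
qed

lemma yau_seq_Suc:
  assumes "i < m"
  shows "zmin_cond M g (D (Suc i))" and "D (Suc i) \<le> D i"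
    and "0 < D (Suc i) j \<Longrightarrow> interE M (D i) j = 0"
    and "zmin_cond M g X \<Longrightarrow> X \<le> D i \<Longrightarrow> \<forall>j. 0 < X j \<longrightarrow> interE M (D i) j = 0 \<Longrightarrow> X \<le> D (Suc i)"
proof -
  have D: "zmin_cond M g (D i)" "Zmin M g \<le> D i"
    using yau_seq_zmin_cond[of i] assms by auto
  have "D (Suc i) = tyurina M g (D i)"
    using assms by (rule yau_seq_Suc_eq_tyurina)
  then have "tyurina_cond M g (D i) (D (Suc i))" "\<And>X. tyurina_cond M g (D i) X \<Longrightarrow> X \<le> D (Suc i)"
    using tyurina_greatest[OF D yau_continues[OF assms]] by simp_all
  then show "zmin_cond M g (D (Suc i))" "D (Suc i) \<le> D i"
    "0 < D (Suc i) j \<Longrightarrow> interE M (D i) j = 0"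
    "zmin_cond M g X \<Longrightarrow> X \<le> D i \<Longrightarrow> \<forall>j. 0 < X j \<longrightarrow> interE M (D i) j = 0 \<Longrightarrow> X \<le> D (Suc i)"
    by (simp_all add: tyurina_cond_iff[OF D(1)])
qed

lemma yau_seq_antimono: "i \<le> l \<Longrightarrow> l \<le> m \<Longrightarrow> D l \<le> D i"
proof (induction l rule: dec_induct)
  case (step l)
  then have "D (Suc l) \<le> D l" by (intro yau_seq_Suc(2)) simp
  with step show ?case by (meson Suc_leD order_trans)
qed simp

lemma yau_seq_inter_eq_0:
  assumes "i < l" "l \<le> m"
  shows "inter M (D i) (D l) = 0"
  unfolding inter_eq_sum_interE
proof (rule sum.neutral, rule ballI)
  fix j
  have "D l \<le> D (Suc i)" using yau_seq_antimono assms by simp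
  then have "0 < D l j \<Longrightarrow> interE M (D i) j = 0"
    using le_funD[of "D l" "D (Suc i)" j] yau_seq_Suc(3)[of i j] assms by simp
  moreover have "0 \<le> D l j"
    using yau_seq_zmin_cond[OF assms(2)] zmin_cond_nonneg by blast
  ultimately show "D l j * interE M (D i) j = 0"
    by (cases "D l j = 0") auto
qed

lemma yau_seq_le_fund_cycle: "i \<le> m \<Longrightarrow> D i \<le> Z"
  using yau_seq_zmin_cond zmin_cond_le_fund_cycle by blast

lemma yau_seq_nonneg: "i \<le> m \<Longrightarrow> 0 \<le> D i j"
  using yau_seq_zmin_cond zmin_cond_nonneg by blast

lemma yau_step_add_curve_le:
  assumes "i < m" "D (Suc i) E < D i E"
  shows "(\<lambda>j. D (Suc i) j + curve E j) \<le> D i"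
  using le_funD[OF yau_seq_Suc(2)[OF assms(1)]] assms(2) by (auto simp: le_fun_def curve_def)

lemma yau_seq_interE_nonpos:
  assumes "i \<le> m" "0 < D i E"
  shows "interE M (D i) E \<le> 0"
proof (cases i)
  case 0
  then show ?thesis using fund_cycle_interE_nonpos by simp
next
  case (Suc k)
  with assms have "k < m" "0 < D (Suc k) E" by simp_all
  let ?X = "D (Suc k)" and ?X' = "\<lambda>j. D (Suc k) j + curve E j"
  have X: "zmin_cond M g ?X" using yau_seq_Suc(1)[OF \<open>k < m\<close>] .
  show ?thesis
  proof (rule ccontr)
    assume "\<not> interE M (D i) E \<le> 0"
    then have pos: "0 < interE M ?X E" using Suc by simp
    show False
    proof (cases "?X E < D k E")
      case True
      then have "?X' \<le> D k" by (rule yau_step_add_curve_le[OF \<open>k < m\<close>])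
      then have le: "?X' \<le> Z" using yau_seq_le_fund_cycle[of k] \<open>k < m\<close> by (simp add: order_trans)
      have "interE M ?X E + g E = 1"
        using zmin_cond_add_curve(1)[OF X le] pos genus_nonneg[of E] by simp
      then have "zmin_cond M g ?X'" by (rule zmin_cond_add_curve(2)[OF X le])
      moreover have "\<forall>j. 0 < ?X' j \<longrightarrow> interE M (D k) j = 0"
        using yau_seq_Suc(3)[OF \<open>k < m\<close>] \<open>0 < ?X E\<close> by (auto simp: curve_def split: if_splits)
      ultimately have "?X' \<le> ?X"
        using yau_seq_Suc(4)[OF \<open>k < m\<close>] \<open>?X' \<le> D k\<close> by blast
      then show False using le_funD[of ?X' ?X E] by (simp add: curve_def)
    next
      case False
      then have "?X E = D k E" using le_funD[OF yau_seq_Suc(2)[OF \<open>k < m\<close>], of E] by simp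
      then have "interE M ?X E \<le> interE M (D k) E"
        using yau_seq_Suc(2)[OF \<open>k < m\<close>] by (rule_tac interE_mono) simp_all
      also have "interE M (D k) E = 0"
        using yau_seq_Suc(3)[OF \<open>k < m\<close> \<open>0 < ?X E\<close>] .
      finally show False using pos by simp
    qed
  qed
qed

lemma yau_step_interE_eq_0:
  assumes "i < m" "0 < D i E" "D (Suc i) E = 0" "interE M (D i) E = 0"
  shows "interE M (D (Suc i)) E = 0"
proof -
  let ?Y = "D (Suc i)" and ?Y' = "\<lambda>j. D (Suc i) j + curve E j"
  have Y: "zmin_cond M g ?Y" using yau_seq_Suc(1)[OF assms(1)] .
  have "E \<noteq> A"
    using zmin_cond_coeff_A(1)[OF Y] fund_cycle_pos[of A] assms(3) by auto
  then have "g E = 0"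
    using minus2_curve_if_ne_A by (simp add: minus2_curve_def)
  have "?Y' \<le> D i" using yau_step_add_curve_le assms by simp
  then have le: "?Y' \<le> Z" using yau_seq_le_fund_cycle[of i] assms(1) by (simp add: order_trans)
  have "0 \<le> interE M ?Y E"
    using interE_nonneg_off_support zmin_cond_nonneg[OF Y] assms(3) by blast
  moreover have "interE M ?Y E \<noteq> 1"
  proof
    assume "interE M ?Y E = 1"
    then have "zmin_cond M g ?Y'"
      using zmin_cond_add_curve(2)[OF Y le] \<open>g E = 0\<close> by simp
    moreover have "\<forall>j. 0 < ?Y' j \<longrightarrow> interE M (D i) j = 0"
      using yau_seq_Suc(3)[OF assms(1)] assms(3,4) by (auto simp: curve_def split: if_splits)
    ultimately have "?Y' \<le> ?Y"
      using yau_seq_Suc(4)[OF assms(1)] \<open>?Y' \<le> D i\<close> by blast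
    then show False using le_funD[of ?Y' ?Y E] by (simp add: curve_def)
  qed
  ultimately show ?thesis
    using zmin_cond_add_curve(1)[OF Y le] \<open>g E = 0\<close> by simp
qed

lemma yau_step_termwise:
  assumes "i < m"
  shows "D i j * interE M (D (Suc i)) j
    \<le> D (Suc i) j * interE M (D (Suc i)) j - D i j * interE M (D i) j"
proof -
  let ?X = "D i" and ?Y = "D (Suc i)"
  have "0 \<le> ?X j" "0 \<le> ?Y j" using yau_seq_nonneg assms by simp_all
  then consider "0 < ?Y j" | "?Y j = 0" "?X j = 0" | "?Y j = 0" "0 < ?X j" by linarith
  then show ?thesis
  proof cases
    case 1
    then have "interE M ?X j = 0" "interE M ?Y j \<le> 0"
      using yau_seq_Suc(3)[OF assms] yau_seq_interE_nonpos[of "Suc i" j] assms by simp_all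
    moreover have "?Y j \<le> ?X j" using le_funD[OF yau_seq_Suc(2)[OF assms]] .
    ultimately show ?thesis by (simp add: mult_right_mono_neg)
  next
    case 2
    then show ?thesis by simp
  next
    case 3
    have "j \<noteq> A"
      using zmin_cond_coeff_A(1)[OF yau_seq_Suc(1)[OF assms]] fund_cycle_pos[of A] 3 by auto
    have "interE M ?X j \<le> 0" "-1 \<le> interE M ?X j"
      using yau_seq_interE_nonpos[of i j] zmin_cond_diff_curve(1)[OF \<open>j \<noteq> A\<close>, of ?X]
        yau_seq_zmin_cond[of i] assms 3 by simp_all
    then consider "interE M ?X j = 0" | "interE M ?X j = -1" by linarith
    then show ?thesis
    proof cases
      case 1
      then show ?thesis using yau_step_interE_eq_0[OF assms] 3 by simp
    next
      case 2
      have "(\<lambda>l. ?Y l + curve j l) \<le> Z"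
        using yau_step_add_curve_le[OF assms, of j] yau_seq_le_fund_cycle[of i] assms 3
        by (simp add: order_trans)
      then have "interE M ?Y j \<le> 1"
        using zmin_cond_add_curve(1)[OF yau_seq_Suc(1)[OF assms]] genus_nonneg[of j] by fastforce
      then show ?thesis using 2 3 by simp
    qed
  qed
qed

text \<open>Summing the termwise inequality over all curves gives D_{i+1}\<cdot>D_{i+1} - D_i\<cdot>D_i
  - D_i\<cdot>D_{i+1} = 0 on both sides, so it is an equality at every curve.\<close>
lemma yau_step_interE_eq_1:
  assumes "i < m" "0 < D i E" "interE M (D i) E = -1"
  shows "interE M (D (Suc i)) E = 1"
proof -
  let ?X = "D i" and ?Y = "D (Suc i)"
  define gap where "gap j = (?Y j * interE M ?Y j - ?X j * interE M ?X j) - ?X j * interE M ?Y j" for j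
  have "(\<Sum>j\<in>UNIV. gap j) = (inter M ?Y ?Y - inter M ?X ?X) - inter M ?Y ?X"
    unfolding gap_def inter_eq_sum_interE by (simp add: sum_subtractf)
  also have "\<dots> = 0"
    using zmin_cond_coeff_A(2) yau_seq_zmin_cond[of i] yau_seq_Suc(1)[OF assms(1)]
      yau_seq_inter_eq_0[of i "Suc i"] inter_commute[of ?Y ?X] assms(1) by simp
  finally have "\<forall>j\<in>UNIV. gap j = 0"
    using yau_step_termwise[OF assms(1)] by (subst (asm) sum_nonneg_eq_0_iff) (auto simp: gap_def)
  then have "gap E = 0" by simp
  moreover have "?Y E = 0"
    using yau_seq_Suc(3)[OF assms(1), of E] yau_seq_nonneg[of "Suc i" E] assms by force
  ultimately have "?X E * interE M ?Y E = ?X E * 1"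
    using assms(3) by (simp add: gap_def)
  then show ?thesis using assms(2) by simp
qed

text \<open>Writing f_i = D_i\<cdot>E, every negative term equals -1 and is immediately followed by
  f_{i+1} = 1, so f_i \<ge> h_i - h_{i+1} with h_{i+1} = [f_i < 0], and the sum telescopes.\<close>
lemma sum_interE_yau_seq_nonneg:
  assumes "E \<noteq> A"
  shows "0 \<le> (\<Sum>i\<le>m. interE M (D i) E)"
proof -
  let ?f = "\<lambda>i. interE M (D i) E"
  define h where "h i = (if 0 < i \<and> ?f (i - 1) < 0 then 1 else 0 :: int)" for i
  have neg: "0 < D i E \<and> ?f i = -1 \<and> i < m \<and> ?f (Suc i) = 1" if "i \<le> m" "?f i < 0" for i
  proof -
    have "0 < D i E"
      using interE_nonneg_off_support[of "D i" E] yau_seq_nonneg[OF \<open>i \<le> m\<close>] that(2)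
      by (metis le_less not_le)
    then have "?f i = -1"
      using zmin_cond_diff_curve(1)[OF assms, of "D i"] yau_seq_zmin_cond[OF \<open>i \<le> m\<close>] that(2) by simp
    moreover have "i \<noteq> m"
    proof
      assume "i = m"
      then have "0 \<le> ?f i"
        using Zmin_interE_nonneg[OF assms] ends_at_Zmin \<open>0 < D i E\<close> by simp
      with that(2) show False by simp
    qed
    ultimately show ?thesis
      using yau_step_interE_eq_1[of i E] \<open>0 < D i E\<close> that(1) by simp
  qed
  have "h i - h (Suc i) \<le> ?f i" if "i \<le> m" for i
  proof (cases "?f i < 0")
    case True
    have "\<not> (0 < i \<and> ?f (i - 1) < 0)"
      using neg[OF that True] neg[of "i - 1"] that True by force
    then show ?thesis using neg[OF that True] by (simp add: h_def)
  next
    case False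
    then show ?thesis using neg[of "i - 1"] that by (auto simp: h_def)
  qed
  then have "(\<Sum>i<Suc m. h i - h (Suc i)) \<le> (\<Sum>i<Suc m. ?f i)"
    by (intro sum_mono) simp
  moreover have "h 0 = 0" "h (Suc m) = 0"
    using neg[of m] by (auto simp: h_def)
  then have "(\<Sum>i<Suc m. h i - h (Suc i)) = 0"
    using sum_lessThan_telescope'[of h "Suc m"] by simp
  ultimately show ?thesis
    by (simp add: lessThan_Suc_atMost)
qed

abbreviation Y where "Y \<equiv> yau_cycle M g m"

lemma yau_cycle_pos: "0 < Y i"
proof -
  have "D 0 i \<le> Y i"
    unfolding yau_cycle_def by (rule member_le_sum) (auto intro: yau_seq_nonneg)
  then show ?thesis using fund_cycle_pos[of i] by simp
qed

lemma yau_cycle_A: "Y A = int (Suc m) * Z A"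
proof -
  have "Y A = (\<Sum>i\<le>m. Z A)"
    unfolding yau_cycle_def using zmin_cond_coeff_A(1) yau_seq_zmin_cond by (intro sum.cong) auto
  then show ?thesis by simp
qed

lemma self_inter_yau_cycle: "inter M Y Y = int (Suc m) * inter M Z Z"
proof -
  have "(\<Sum>l\<le>m. inter M (D i) (D l)) = inter M Z Z" if "i \<le> m" for i
  proof -
    have "(\<Sum>l\<le>m. inter M (D i) (D l)) = (\<Sum>l\<le>m. if l = i then inter M Z Z else 0)"
    proof (rule sum.cong[OF refl])
      fix l assume "l \<in> {..m}"
      then show "inter M (D i) (D l) = (if l = i then inter M Z Z else 0)"
        using zmin_cond_coeff_A(2) yau_seq_zmin_cond[of i] yau_seq_inter_eq_0[of i l]
          yau_seq_inter_eq_0[of l i] inter_commute[of "D i" "D l"] that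
        by (cases l i rule: linorder_cases) auto
    qed
    with that show ?thesis by simp
  qed
  then have "inter M Y Y = (\<Sum>i\<le>m. inter M Z Z)"
    unfolding yau_cycle_def inter_sum_left inter_sum_right by simp
  then show ?thesis by simp
qed

lemma interE_yau_cycle: "interE M Y E = (\<Sum>i\<le>m. interE M (D i) E)"
  unfolding yau_cycle_def by (rule interE_sum)

lemma interE_yau_cycle_A: "interE M Y A = interE M (Zmin M g) A"
proof -
  have "0 < Zmin M g A"
    using zmin_cond_coeff_A(1)[of "Zmin M g"] Zmin_least fund_cycle_pos[of A] by simp
  then have "(\<Sum>i\<le>m. interE M (D i) A) = (\<Sum>i\<le>m. if i = m then interE M (Zmin M g) A else 0)"
    using yau_continues ends_at_Zmin by (intro sum.cong) auto
  then show ?thesis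
    unfolding interE_yau_cycle by simp
qed

text \<open>Z_min\<cdot>E vanishes on every (-2)-curve E in its support (it is \<ge> 0 by minimality
  and \<le> 0 since Z_min = D_m), so Z_min\<cdot>Z_min reduces to the A-term.\<close>
lemma fund_cycle_A_mult_interE_Zmin: "Z A * interE M (Zmin M g) A = inter M Z Z"
proof -
  have Zmin: "zmin_cond M g (Zmin M g)" using Zmin_least by blast
  have "Zmin M g j * interE M (Zmin M g) j = 0" if "j \<noteq> A" for j
  proof (cases "0 < Zmin M g j")
    case True
    then show ?thesis
      using Zmin_interE_nonneg[OF that] yau_seq_interE_nonpos[of m j] ends_at_Zmin by simp
  next
    case False
    then show ?thesis using zmin_cond_nonneg[OF Zmin, of j] by simp
  qed
  then have "inter M (Zmin M g) (Zmin M g) = (\<Sum>j\<in>UNIV. curve A j * (Zmin M g A * interE M (Zmin M g) A))"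
    unfolding inter_eq_sum_interE by (intro sum.cong) (auto simp: curve_def)
  then show ?thesis
    using zmin_cond_coeff_A[OF Zmin] by (simp add: sum_curve_mult)
qed

text \<open>Since Y\<cdot>Y = (m+1) Z\<cdot>Z = Y_A (Y\<cdot>A), the remaining terms Y_E (Y\<cdot>E), E \<noteq> A, sum to 0;
  each is nonnegative, hence zero.\<close>
lemma interE_yau_cycle_eq_0:
  assumes "E \<noteq> A"
  shows "interE M Y E = 0"
proof -
  define w where "w j = (if j = A then 0 else Y j * interE M Y j)" for j
  have "inter M Y Y = (\<Sum>j\<in>UNIV. curve A j * (Y A * interE M Y A) + w j)"
    unfolding inter_eq_sum_interE w_def by (intro sum.cong) (auto simp: curve_def)
  also have "\<dots> = Y A * interE M Y A + (\<Sum>j\<in>UNIV. w j)"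
    by (simp add: sum.distrib sum_curve_mult)
  finally have "(\<Sum>j\<in>UNIV. w j) = 0"
    using yau_cycle_A self_inter_yau_cycle interE_yau_cycle_A fund_cycle_A_mult_interE_Zmin
    by (simp add: algebra_simps)
  moreover have "0 \<le> w j" for j
    using yau_cycle_pos[of j] sum_interE_yau_seq_nonneg[of j] interE_yau_cycle[of j]
    by (simp add: w_def)
  ultimately have "w E = 0"
    by (simp add: sum_nonneg_eq_0_iff)
  then show ?thesis
    using assms yau_cycle_pos[of E] by (simp add: w_def)
qed

lemma canonical_cycle_eq_multiple_of_yau_cycle:
  "canonical_cycle M g
     = (\<lambda>i. real_of_int (Z A * KE M g A) / - real_of_int (inter M Z Z) * real_of_int (Y i))"
proof (rule canonical_cycle_eqI)
  fix i
  let ?c = "real_of_int (Z A * KE M g A) / - real_of_int (inter M Z Z)"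
  have "(\<Sum>j\<in>UNIV. ?c * real_of_int (Y j) * real_of_int (M j i)) = ?c * real_of_int (interE M Y i)"
    unfolding interE_def by (simp add: of_int_sum sum_distrib_left mult.assoc)
  also have "\<dots> = - real_of_int (KE M g i)"
  proof (cases "i = A")
    case True
    have "inter M Z Z < 0" using inter_self_neg[OF fund_cycle_nonzero] .
    moreover have "real_of_int (Z A) * real_of_int (interE M (Zmin M g) A) = real_of_int (inter M Z Z)"
      using fund_cycle_A_mult_interE_Zmin by (metis of_int_mult)
    ultimately show ?thesis
      using True by (simp add: interE_yau_cycle_A field_simps)
  qed (simp add: interE_yau_cycle_eq_0 KE_eq_0)
  finally show "(\<Sum>j\<in>UNIV. ?c * real_of_int (Y j) * real_of_int (M j i)) = - real_of_int (KE M g i)" .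
qed

end

theorem proposition3p6:
  fixes M :: "'e::finite \<Rightarrow> 'e \<Rightarrow> int" and g :: "'e \<Rightarrow> int" and A :: 'e and m :: nat
  assumes "resolution_data M g"
    and "minimal_resolution M g"
    and "pf M g > 0"
    and "essentially_irreducible M g (fund_cycle M)"
    and "fund_cycle M A > 0" and "\<not> minus2_curve M g A"
    and "KE M g A + inter M (fund_cycle M) (fund_cycle M) \<ge> 0"
    and "yau_last M g m"
    and "yau_seq M g m = Zmin M g"
  shows "canonical_cycle M g =
     (\<lambda>i. ((2 - 2 * pf M g) / real_of_int (inter M (fund_cycle M) (fund_cycle M)) + 1)
          * real_of_int (yau_cycle M g m i))"
proof -
  interpret yau_sequence_ending_at_Zmin M g A m
    by unfold_locales (use assms in auto)
  have "inter M Z Z < 0"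
    using inter_self_neg[OF fund_cycle_nonzero] .
  then have "(2 - 2 * pf M g) / real_of_int (inter M Z Z) + 1
      = real_of_int (Z A * KE M g A) / - real_of_int (inter M Z Z)"
    by (simp add: pf_eq field_simps)
  then show ?thesis
    using canonical_cycle_eq_multiple_of_yau_cycle by simp
qed

end
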